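(* Let $\kappa<\Gamma$ be infinite cardinals. Then the Banach space $X_0^{\kappa,\Gamma}=\{f\in\ell_\infty(\Gamma):\exists A\subseteq\Gamma,\ |A|=\kappa,\ f|_{\Gamma\setminus A}\equiv 0\}$ (with the sup norm) fails the ball fixed point property.
   Context: $\ell_\infty(\Gamma)$ is the Banach space of bounded functions $\Gamma\to\mathbb{R}$ with the sup norm, where the cardinal $\Gamma$ is identified with the set of ordinals below it. A real Banach space $X$ has the ball fixed point property (BFPP) if every nonexpansive map $T\colon B_X\to B_X$ (i.e. $\|Tx-Ty\|\le\|x-y\|$) has a fixed point, where $B_X$ is the closed unit ball. *)

theory Defs
  imports Complex_Main
begin

definition supnorm :: "('g \<Rightarrow> real) \<Rightarrow> real" where
  "supnorm f = (SUP x. \<bar>f x\<bar>)"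

definition linf :: "('g \<Rightarrow> real) set" where
  "linf = {f. bdd_above (range (\<lambda>x. \<bar>f x\<bar>))}"

text \<open>The space X_0^{kappa,Gamma}, kappa given as the cardinality of the type 'k,
  Gamma as the cardinality of the type 'g.\<close>
definition X0 :: "'k itself \<Rightarrow> ('g \<Rightarrow> real) set" where
  "X0 _ = {f \<in> linf. \<exists>A :: 'g set.
       (card_of A, card_of (UNIV :: 'k set)) \<in> ordIso \<and> (\<forall>x. x \<notin> A \<longrightarrow> f x = 0)}"

definition unit_ball :: "('g \<Rightarrow> real) set \<Rightarrow> ('g \<Rightarrow> real) set" where
  "unit_ball X = {f \<in> X. supnorm f \<le> 1}"

definition nonexpansive_on :: "('g \<Rightarrow> real) set \<Rightarrow> (('g \<Rightarrow> real) \<Rightarrow> ('g \<Rightarrow> real)) \<Rightarrow> bool" where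
  "nonexpansive_on B T \<longleftrightarrow> (\<forall>f\<in>B. \<forall>g\<in>B. supnorm (T f - T g) \<le> supnorm (f - g))"

definition BFPP :: "('g \<Rightarrow> real) set \<Rightarrow> bool" where
  "BFPP X \<longleftrightarrow> (\<forall>T. T ` unit_ball X \<subseteq> unit_ball X \<and> nonexpansive_on (unit_ball X) T
      \<longrightarrow> (\<exists>f\<in>unit_ball X. T f = f))"

end

theory Submission
  imports Defs
begin

text \<open>Fix a well-order of \<open>\<Gamma>\<close> and let \<open>T f\<close> take the value 1 at the least element and,
  at any other \<open>x\<close>, the infimum over \<open>y < x\<close> of the supremum of \<open>\<bar>f\<bar>\<close> on \<open>[y, x)\<close>: this is
  \<open>\<bar>f y\<bar>\<close> at a successor \<open>x = y + 1\<close> and the left limsup of \<open>\<bar>f\<bar>\<close> at a limit. Suprema and infima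
  are 1-Lipschitz, so \<open>T\<close> is nonexpansive. \<open>T f\<close> can only be nonzero at left limits of the
  support \<open>S\<close> of \<open>f\<close>, and sending such a point to the first element of \<open>S\<close> above it is
  injective, so \<open>T f\<close> again has support of size at most \<open>\<kappa>\<close>. A fixed point of \<open>T\<close> is
  constantly 1 by transfinite induction, and its support \<open>\<Gamma>\<close> is too large.\<close>

unbundle cardinal_syntax

lemma cSUP_le_cSUP_plus:
  fixes F G :: "'a \<Rightarrow> real"
  assumes "A \<noteq> {}" "bdd_above (G ` A)" "\<And>a. a \<in> A \<Longrightarrow> F a \<le> G a + d"
  shows "(SUP a\<in>A. F a) \<le> (SUP a\<in>A. G a) + d"
proof (rule cSUP_least[OF assms(1)])
  fix a assume a: "a \<in> A"
  show "F a \<le> (SUP a\<in>A. G a) + d"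
    using assms(3)[OF a] cSUP_upper[OF a assms(2)] by linarith
qed

lemma cINF_le_cINF_plus:
  fixes F G :: "'a \<Rightarrow> real"
  assumes "A \<noteq> {}" "bdd_below (F ` A)" "\<And>a. a \<in> A \<Longrightarrow> F a \<le> G a + d"
  shows "(INF a\<in>A. F a) \<le> (INF a\<in>A. G a) + d"
proof -
  have "(INF a\<in>A. F a) - d \<le> (INF a\<in>A. G a)"
  proof (rule cINF_greatest[OF assms(1)])
    fix a assume a: "a \<in> A"
    show "(INF a\<in>A. F a) - d \<le> G a"
      using assms(3)[OF a] cINF_lower[OF assms(2) a] by linarith
  qed
  then show ?thesis by linarith
qed

lemma mem_linf_iff: "f \<in> linf \<longleftrightarrow> (\<exists>M. \<forall>x. \<bar>f x\<bar> \<le> M)"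
  by (auto simp: linf_def bdd_above_def)

lemma linf_diff: "f \<in> linf \<Longrightarrow> g \<in> linf \<Longrightarrow> f - g \<in> linf"
  unfolding mem_linf_iff by (metis abs_triangle_ineq4 add_mono minus_apply order_trans)

lemma abs_le_supnorm: "f \<in> linf \<Longrightarrow> \<bar>f x\<bar> \<le> supnorm f"
  unfolding linf_def supnorm_def by (auto intro: cSUP_upper)

lemma supnorm_le: "(\<And>x. \<bar>f x\<bar> \<le> c) \<Longrightarrow> supnorm f \<le> c"
  unfolding supnorm_def by (rule cSUP_least) auto

lemma unit_ball_abs_le: "f \<in> unit_ball X \<Longrightarrow> X \<subseteq> linf \<Longrightarrow> \<bar>f x\<bar> \<le> 1"
  unfolding unit_ball_def by (metis (mono_tags) mem_Collect_eq abs_le_supnorm order_trans subsetD)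

lemma X0_subset_linf: "X0 TYPE('k) \<subseteq> linf"
  unfolding X0_def by blast

subsection \<open>The limsup shift along a well-order\<close>

definition interval_sup :: "'g rel \<Rightarrow> ('g \<Rightarrow> real) \<Rightarrow> 'g \<Rightarrow> 'g \<Rightarrow> real" where
  "interval_sup r f y x = (SUP z \<in> underS r x - underS r y. \<bar>f z\<bar>)"

definition limsup_shift :: "'g rel \<Rightarrow> ('g \<Rightarrow> real) \<Rightarrow> 'g \<Rightarrow> real" where
  "limsup_shift r f x =
     (if underS r x = {} then 1 else (INF y \<in> underS r x. interval_sup r f y x))"

lemma interval_sup_bounds:
  assumes "\<And>z. \<bar>f z\<bar> \<le> 1" "y \<in> underS r x"
  shows "\<bar>f y\<bar> \<le> interval_sup r f y x" "0 \<le> interval_sup r f y x" "interval_sup r f y x \<le> 1"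
proof -
  have y: "y \<in> underS r x - underS r y" using assms(2) underS_notIn by fast
  show "\<bar>f y\<bar> \<le> interval_sup r f y x"
    unfolding interval_sup_def using assms(1) by (intro cSUP_upper[OF y] bdd_aboveI[where M = 1]) auto
  then show "0 \<le> interval_sup r f y x" by linarith
  show "interval_sup r f y x \<le> 1"
    unfolding interval_sup_def using y assms(1) by (intro cSUP_least) auto
qed

lemma bdd_below_interval_sup:
  assumes "\<And>z. \<bar>f z\<bar> \<le> 1"
  shows "bdd_below ((\<lambda>y. interval_sup r f y x) ` underS r x)"
  using interval_sup_bounds(2)[of f, OF assms] by (auto intro!: bdd_belowI[where m = 0])

lemma limsup_shift_bounds:
  assumes "\<And>z. \<bar>f z\<bar> \<le> 1"
  shows "0 \<le> limsup_shift r f x" "limsup_shift r f x \<le> 1"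
proof -
  have "0 \<le> limsup_shift r f x \<and> limsup_shift r f x \<le> 1"
  proof (cases "underS r x = {}")
    case False
    then obtain y where y: "y \<in> underS r x" by blast
    have "(INF y \<in> underS r x. interval_sup r f y x) \<le> 1"
      using cINF_lower[OF bdd_below_interval_sup[of f, OF assms] y]
        interval_sup_bounds(3)[of f, OF assms y] by linarith
    moreover have "0 \<le> (INF y \<in> underS r x. interval_sup r f y x)"
      using False interval_sup_bounds(2)[of f, OF assms] by (intro cINF_greatest) auto
    ultimately show ?thesis using False unfolding limsup_shift_def by simp
  qed (simp add: limsup_shift_def)
  then show "0 \<le> limsup_shift r f x" "limsup_shift r f x \<le> 1" by auto
qed

lemma limsup_shift_le_plus:
  assumes "\<And>z. \<bar>f z\<bar> \<le> 1" "\<And>z. \<bar>g z\<bar> \<le> 1" "\<And>z. \<bar>f z - g z\<bar> \<le> d"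
  shows "limsup_shift r f x \<le> limsup_shift r g x + d"
proof (cases "underS r x = {}")
  case True
  have "0 \<le> d" using assms(3) by (meson abs_ge_zero order_trans)
  then show ?thesis using True unfolding limsup_shift_def by simp
next
  case False
  have "interval_sup r f y x \<le> interval_sup r g y x + d" if y: "y \<in> underS r x" for y
    unfolding interval_sup_def
  proof (rule cSUP_le_cSUP_plus)
    show "underS r x - underS r y \<noteq> {}" using y underS_notIn by fast
    show "bdd_above ((\<lambda>z. \<bar>g z\<bar>) ` (underS r x - underS r y))"
      using assms(2) by (auto intro!: bdd_aboveI[where M = 1])
    show "\<bar>f z\<bar> \<le> \<bar>g z\<bar> + d" for z
      using assms(3)[of z] by linarith
  qed
  then show ?thesis
    using False cINF_le_cINF_plus[OF False bdd_below_interval_sup[of f, OF assms(1)]]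
    unfolding limsup_shift_def by simp
qed

lemma abs_limsup_shift_diff_le:
  assumes "\<And>z. \<bar>f z\<bar> \<le> 1" "\<And>z. \<bar>g z\<bar> \<le> 1" "\<And>z. \<bar>f z - g z\<bar> \<le> d"
  shows "\<bar>limsup_shift r f x - limsup_shift r g x\<bar> \<le> d"
  using limsup_shift_le_plus[of f g d r x] limsup_shift_le_plus[of g f d r x] assms
  by (simp add: abs_minus_commute abs_le_iff)

lemma limsup_shift_eq_0:
  assumes "\<And>z. \<bar>f z\<bar> \<le> 1" "y \<in> underS r x"
    and "\<And>z. z \<in> underS r x - underS r y \<Longrightarrow> f z = 0"
  shows "limsup_shift r f x = 0"
proof -
  have "interval_sup r f y x = (SUP z \<in> underS r x - underS r y. 0)"
    unfolding interval_sup_def using assms(3) by (intro SUP_cong) auto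
  also have "\<dots> = 0" using assms(2) underS_notIn by (intro cSUP_const) fast
  finally have "limsup_shift r f x \<le> 0"
    using assms(2) cINF_lower[OF bdd_below_interval_sup[of f, OF assms(1)] assms(2)]
    unfolding limsup_shift_def by auto
  with limsup_shift_bounds(1)[of f, OF assms(1)] show ?thesis by (meson order_antisym)
qed

lemma limsup_shift_fixpoint_eq_1:
  assumes "wf (r - Id)" "limsup_shift r f = f"
  shows "f x = 1"
proof (induction x rule: wf_induct_rule[OF assms(1)])
  case (1 x)
  then have below: "f z = 1" if "z \<in> underS r x" for z
    using that by (auto simp: underS_def)
  have "interval_sup r f y x = 1" if y: "y \<in> underS r x" for y
  proof -
    have "interval_sup r f y x = (SUP z \<in> underS r x - underS r y. 1)"
      unfolding interval_sup_def using below by (intro SUP_cong) auto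
    also have "\<dots> = 1" using y underS_notIn by (intro cSUP_const) fast
    finally show ?thesis .
  qed
  then have "limsup_shift r f x = 1"
    unfolding limsup_shift_def by (simp add: cINF_const)
  then show ?case using assms(2) by simp
qed

text \<open>Besides the genuine left limits of \<open>S\<close>, this contains the least element and the
  successors of the points of \<open>S\<close>.\<close>

definition left_accumulation :: "'g rel \<Rightarrow> 'g set \<Rightarrow> 'g set" where
  "left_accumulation r S = {x. \<forall>y \<in> underS r x. S \<inter> (underS r x - underS r y) \<noteq> {}}"

lemma limsup_shift_support:
  assumes "\<And>z. \<bar>f z\<bar> \<le> 1"
  shows "{x. limsup_shift r f x \<noteq> 0} \<subseteq> left_accumulation r {z. f z \<noteq> 0}"
  using limsup_shift_eq_0[of f, OF assms] unfolding left_accumulation_def by blast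

subsection \<open>Cardinality of the left accumulation points\<close>

lemma not_in_underS_iff:
  assumes "well_order_on UNIV r"
  shows "a \<notin> underS r b \<longleftrightarrow> (b, a) \<in> r"
proof -
  have "refl_on UNIV r" "antisym r" "total_on UNIV r"
    using assms by (auto simp: well_order_on_def linear_order_on_def partial_order_on_def
        preorder_on_def)
  show ?thesis
  proof
    assume "a \<notin> underS r b"
    then have "a = b \<or> (a, b) \<notin> r" by (auto simp: underS_def)
    then show "(b, a) \<in> r"
      using \<open>refl_on UNIV r\<close> \<open>total_on UNIV r\<close>
      by (cases "a = b") (auto simp: refl_on_def total_on_def)
  next
    assume "(b, a) \<in> r"
    then show "a \<notin> underS r b"
      using \<open>antisym r\<close> by (auto simp: underS_def antisym_def)
  qed
qed

lemma card_of_left_accumulation_ordLeq_option: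
  assumes wo: "well_order_on UNIV r"
  shows "|left_accumulation r S| \<le>o |insert None (Some ` S)|"
proof -
  have wo_rel: "wo_rel r"
    using wo well_order_on_Well_order wo_rel_def by blast
  have Field: "Field r = UNIV"
    using wo well_order_on_Field by blast
  have "trans r"
    using wo by (simp add: well_order_on_def linear_order_on_def partial_order_on_def
        preorder_on_def)
  have below_iff: "a \<notin> underS r b \<longleftrightarrow> (b, a) \<in> r" for a b
    using not_in_underS_iff[OF wo] .
  define above where "above x = {s \<in> S. (x, s) \<in> r}" for x
  define first where
    "first x = (if above x = {} then None else Some (wo_rel.minim r (above x)))" for x
  have first_in: "first x \<in> insert None (Some ` S)" for x
    using wo_rel.minim_in[OF wo_rel, of "above x"] by (auto simp: first_def above_def Field)
  have first_above: "(x, s) \<in> r" if "first x = Some s" for x s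
    using that wo_rel.minim_in[OF wo_rel, of "above x"]
    by (auto simp: first_def above_def Field split: if_splits)
  have first_separates: "first x \<noteq> first y"
    if y: "y \<in> left_accumulation r S" and xy: "x \<in> underS r y" for x y
  proof -
    obtain z where z: "z \<in> S" "z \<in> underS r y" "(x, z) \<in> r"
    proof -
      have "S \<inter> (underS r y - underS r x) \<noteq> {}"
        using y xy unfolding left_accumulation_def by blast
      then show ?thesis using that below_iff by blast
    qed
    then have "z \<in> above x" by (simp add: above_def)
    then have m: "first x = Some (wo_rel.minim r (above x))" "(wo_rel.minim r (above x), z) \<in> r"
      using wo_rel.minim_least[OF wo_rel, of "above x" z] by (auto simp: first_def Field)
    have "wo_rel.minim r (above x) \<in> underS r y"
      using m(2) z(2) below_iff \<open>trans r\<close> unfolding trans_def by blast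
    then show ?thesis
      using m(1) first_above[of y] below_iff by fastforce
  qed
  have "inj_on first (left_accumulation r S)"
  proof (rule inj_onI, rule ccontr)
    fix x y
    assume "x \<in> left_accumulation r S" "y \<in> left_accumulation r S"
      and "first x = first y" "x \<noteq> y"
    moreover have "x \<in> underS r y \<or> y \<in> underS r x"
      using \<open>x \<noteq> y\<close> below_iff by (auto simp: underS_def)
    ultimately show False
      using first_separates[of y x] first_separates[of x y] by auto
  qed
  then show ?thesis
    unfolding card_of_ordLeq[symmetric] using first_in by (intro exI[of _ first]) auto
qed

lemma card_of_left_accumulation_ordLeq:
  assumes "well_order_on UNIV r" "infinite C" "|S| \<le>o |C|"
  shows "|left_accumulation r S| \<le>o |C|"
proof -
  have "|{None} \<union> Some ` S| \<le>o |C|"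
  proof (rule card_of_Un_ordLeq_infinite_Field)
    show "|{None}| \<le>o |C|"
      using assms(2) by (intro card_of_singl_ordLeq) auto
    show "|Some ` S| \<le>o |C|"
      using ordLeq_transitive[OF card_of_image assms(3)] .
  qed (simp_all add: assms(2) Field_card_of card_of_card_order_on)
  then show ?thesis
    using ordLeq_transitive[OF card_of_left_accumulation_ordLeq_option[OF assms(1)]] by simp
qed

lemma ex_superset_card_of_ordIso:
  assumes "infinite C" "|C| \<le>o |UNIV :: 'g set|" "|B :: 'g set| \<le>o |C|"
  shows "\<exists>A. |A| =o |C| \<and> B \<subseteq> A"
proof -
  obtain h :: "_ \<Rightarrow> 'g" where h: "inj_on h C"
    using assms(2) card_of_ordLeq[of C "UNIV :: 'g set"] by auto
  then have hC: "|h ` C| =o |C|"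
    using card_of_image ordIso_iff_ordLeq card_of_ordLeq by (metis image_mono order_refl)
  have "|B \<union> h ` C| \<le>o |C|"
    using assms(1,3) card_of_image[of h C]
    by (intro card_of_Un_ordLeq_infinite_Field) (simp_all add: Field_card_of card_of_card_order_on)
  moreover have "|C| \<le>o |B \<union> h ` C|"
    using hC card_of_mono1[of "h ` C" "B \<union> h ` C"] ordIso_ordLeq_trans ordIso_symmetric by blast
  ultimately show ?thesis
    using ordIso_iff_ordLeq by blast
qed

lemma limsup_shift_in_unit_ball_X0:
  assumes wo: "well_order_on UNIV r" and k: "infinite (UNIV :: 'k set)"
    and kg: "|UNIV :: 'k set| \<le>o |UNIV :: 'g set|"
    and f: "f \<in> unit_ball (X0 TYPE('k) :: ('g \<Rightarrow> real) set)"
  shows "limsup_shift r f \<in> unit_ball (X0 TYPE('k))"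
proof -
  have f_le: "\<And>z. \<bar>f z\<bar> \<le> 1"
    using unit_ball_abs_le[OF f X0_subset_linf] .
  have Tf_le: "\<bar>limsup_shift r f x\<bar> \<le> 1" for x
    using limsup_shift_bounds[of f, OF f_le] by (simp add: abs_le_iff)
  obtain A where A: "|A| =o |UNIV :: 'k set|" "\<And>x. x \<notin> A \<Longrightarrow> f x = 0"
    using f unfolding unit_ball_def X0_def by blast
  have "|{z. f z \<noteq> 0}| \<le>o |UNIV :: 'k set|"
    using A card_of_mono1[of "{z. f z \<noteq> 0}" A] ordLeq_ordIso_trans by blast
  then have "|left_accumulation r {z. f z \<noteq> 0}| \<le>o |UNIV :: 'k set|"
    using card_of_left_accumulation_ordLeq[OF wo k] by blast
  then obtain A' where A': "|A'| =o |UNIV :: 'k set|" "left_accumulation r {z. f z \<noteq> 0} \<subseteq> A'"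
    using ex_superset_card_of_ordIso[OF k kg] by blast
  have "\<forall>x. x \<notin> A' \<longrightarrow> limsup_shift r f x = 0"
    using A'(2) limsup_shift_support[of f, OF f_le] by blast
  moreover have "limsup_shift r f \<in> linf"
    using Tf_le mem_linf_iff by blast
  ultimately show ?thesis
    using A'(1) supnorm_le[of "limsup_shift r f", OF Tf_le] unfolding unit_ball_def X0_def by blast
qed

lemma nonexpansive_limsup_shift:
  assumes "X \<subseteq> linf"
  shows "nonexpansive_on (unit_ball X) (limsup_shift r)"
  unfolding nonexpansive_on_def
proof (intro ballI)
  fix f g assume f: "f \<in> unit_ball X" and g: "g \<in> unit_ball X"
  have "f - g \<in> linf"
    using f g assms linf_diff unfolding unit_ball_def by blast
  then have "\<bar>f z - g z\<bar> \<le> supnorm (f - g)" for z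
    using abs_le_supnorm by fastforce
  then have "\<bar>limsup_shift r f x - limsup_shift r g x\<bar> \<le> supnorm (f - g)" for x
    using unit_ball_abs_le[OF f assms] unit_ball_abs_le[OF g assms]
    by (intro abs_limsup_shift_diff_le)
  then show "supnorm (limsup_shift r f - limsup_shift r g) \<le> supnorm (f - g)"
    by (intro supnorm_le) simp
qed

lemma limsup_shift_not_fixpoint_X0:
  assumes wo: "well_order_on UNIV r"
    and kg: "|UNIV :: 'k set| <o |UNIV :: 'g set|"
    and f: "f \<in> (X0 TYPE('k) :: ('g \<Rightarrow> real) set)"
  shows "limsup_shift r f \<noteq> f"
proof
  assume fixpoint: "limsup_shift r f = f"
  have "wf (r - Id)"
    using wo by (simp add: well_order_on_def)
  then have one: "f x = 1" for x
    using limsup_shift_fixpoint_eq_1[OF _ fixpoint] by blast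
  obtain A where A: "|A| =o |UNIV :: 'k set|" "\<And>x. x \<notin> A \<Longrightarrow> f x = 0"
    using f unfolding X0_def by blast
  then have "A = UNIV"
    using one by force
  with A(1) kg show False
    using not_ordLess_ordIso ordIso_symmetric by fastforce
qed

theorem mainTheorem9:
  assumes "infinite (UNIV :: 'k set)"
    and "infinite (UNIV :: 'g set)"
    and "(card_of (UNIV :: 'k set), card_of (UNIV :: 'g set)) \<in> ordLess"
  shows "\<not> BFPP (X0 TYPE('k) :: ('g \<Rightarrow> real) set)"
proof -
  obtain r :: "'g rel" where wo: "well_order_on UNIV r"
    using well_order_on by blast
  let ?B = "unit_ball (X0 TYPE('k) :: ('g \<Rightarrow> real) set)"
  have "limsup_shift r ` ?B \<subseteq> ?B"
    using limsup_shift_in_unit_ball_X0[OF wo assms(1) ordLess_imp_ordLeq[OF assms(3)]] by blast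
  moreover have "nonexpansive_on ?B (limsup_shift r)"
    using nonexpansive_limsup_shift[OF X0_subset_linf] .
  moreover have "limsup_shift r f \<noteq> f" if "f \<in> ?B" for f
    using that limsup_shift_not_fixpoint_X0[OF wo assms(3)] unfolding unit_ball_def by blast
  ultimately show ?thesis
    unfolding BFPP_def by blast
qed

end
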